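(* Let $\tilde f$ be analytic on $[-1,1]$ and $F=[f_{k,\ell}]$ the coefficient matrix of $\tilde f(t)\Theta(t-s)$. Then there exist $K>0$ and $\rho>1$ such that $|f_{k,\ell}|\le K\rho^{-|k-\ell|}$ for all $k,\ell\ge0$. Consequently, if $\tilde g$ is also analytic on $[-1,1]$ and $G$ is the coefficient matrix of $\tilde g(t)\Theta(t-s)$, then for all $k,\ell\ge0$ the series $\sum_{j\ge0}f_{k,j}g_{j,\ell}$ converges absolutely, so the product $FG$ is well defined.
   Context: Let $\{p_k\}_{k\ge0}$ be the orthonormal Legendre polynomials on $[-1,1]$: $p_k$ has exact degree $k$, positive leading coefficient, and $\int_{-1}^1 p_k(t)p_\ell(t)\,dt=\delta_{k\ell}$. Let $\Theta$ be the Heaviside function, $\Theta(x)=0$ for $x<0$ and $\Theta(x)=1$ for $x\ge0$. The coefficient matrix of a bounded function $h$ on $[-1,1]^2$ is the infinite matrix $H=[h_{k,\ell}]_{k,\ell\ge0}$ with $h_{k,\ell}=\int_{-1}^1\int_{-1}^1 h(\tau,\rho)p_k(\tau)p_\ell(\rho)\,d\rho\,d\tau$. *)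

theory Defs
  imports "HOL-Analysis.Analysis"
begin

definition legendreP :: "nat \<Rightarrow> real \<Rightarrow> real" where
  "legendreP n x = (\<Sum>i\<le>n. real (n choose i) * real ((n + i) choose i) * ((x - 1) / 2) ^ i)"

text \<open>Orthonormal Legendre polynomials on [-1,1]: p_k = sqrt((2k+1)/2) P_k
  (exact degree k, positive leading coefficient, orthonormal w.r.t. dt on [-1,1]).\<close>
definition legendre_on :: "nat \<Rightarrow> real \<Rightarrow> real" where
  "legendre_on k t = sqrt ((2 * real k + 1) / 2) * legendreP k t"

definition heaviside :: "real \<Rightarrow> real" where
  "heaviside x = (if x \<ge> 0 then 1 else 0)"

definition coeff_matrix :: "(real \<Rightarrow> real \<Rightarrow> real) \<Rightarrow> nat \<Rightarrow> nat \<Rightarrow> real" where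
  "coeff_matrix h k l =
     integral {-1..1} (\<lambda>\<tau>. integral {-1..1} (\<lambda>\<rho>. h \<tau> \<rho> * legendre_on k \<tau> * legendre_on l \<rho>))"

definition real_analytic_on_interval :: "(real \<Rightarrow> real) \<Rightarrow> bool" where
  "real_analytic_on_interval f \<longleftrightarrow>
     (\<forall>x\<in>{-1..1}. \<exists>r>0. \<exists>a::nat \<Rightarrow> real.
        \<forall>y. \<bar>y - x\<bar> < r \<longrightarrow> (\<lambda>n. a n * (y - x) ^ n) sums f y)"

end

theory Submission
  imports Defs "HOL-Computational_Algebra.Polynomial" "HOL-Complex_Analysis.Complex_Analysis"
begin

text \<open>Write \<open>p\<^sub>k\<close> for the orthonormal Legendre polynomials and \<open>Q\<^sub>l(t) = \<integral>\<^sub>-\<^sub>1\<^sup>t p\<^sub>l\<close>.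
  Integrating out the Heaviside factor gives \<open>f\<^sub>k\<^sub>,\<^sub>l = \<integral> f p\<^sub>k Q\<^sub>l\<close>. Since \<open>p\<^sub>k\<close> is orthogonal to
  polynomials of degree \<open>< k\<close>, and \<open>Q\<^sub>l\<close> vanishes at both endpoints and hence (by parts) is
  orthogonal to polynomials of degree \<open>\<le> l - 2\<close>, the integral \<open>\<integral> q p\<^sub>k Q\<^sub>l\<close> vanishes for every
  polynomial \<open>q\<close> of degree roughly \<open>\<bar>k - l\<bar>\<close>; thus \<open>\<bar>f\<^sub>k\<^sub>,\<^sub>l\<bar> \<le> 9/4 \<parallel>f - q\<parallel>\<^sub>\<infinity>\<close>.
  An analytic \<open>f\<close> extends holomorphically to a rectangle around \<open>[-1,1]\<close>, and Cauchy's formula with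
  the polynomial kernel \<open>cnj(z - x) \<Sum>\<^sub>n\<^sub>\<le>\<^sub>N (1 - \<bar>z - x\<bar>\<^sup>2/8)\<^sup>n / 8\<close>, a truncated geometric series
  for \<open>1/(z - x)\<close> on the boundary, yields polynomials of degree \<open>2N + 1\<close> within \<open>O(\<theta>\<^sup>N)\<close> of \<open>f\<close>.
  Geometric decay of both matrices makes the series for \<open>FG\<close> dominated by a geometric series.\<close>

section \<open>Integrals of polynomials over \<open>[-1, 1]\<close>\<close>

lemma pderiv_sum: "pderiv (sum f A) = (\<Sum>i\<in>A. pderiv (f i))"
  by (induct A rule: infinite_finite_induct) (auto simp: pderiv_add)

definition poly_antideriv :: "'a::field_char_0 poly \<Rightarrow> 'a poly" where
  "poly_antideriv p = (\<Sum>i\<le>degree p. monom (coeff p i / of_nat (Suc i)) (Suc i))"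

lemma pderiv_poly_antideriv [simp]: "pderiv (poly_antideriv p) = p"
proof -
  have "pderiv (poly_antideriv p) = (\<Sum>i\<le>degree p. monom (coeff p i) i)"
    unfolding poly_antideriv_def pderiv_sum
    by (intro sum.cong refl) (simp add: pderiv_monom del: of_nat_Suc)
  also have "\<dots> = p" by (rule poly_as_sum_of_monoms)
  finally show ?thesis .
qed

lemma degree_poly_antideriv: "degree (poly_antideriv p) \<le> Suc (degree p)"
  unfolding poly_antideriv_def
  by (intro degree_sum_le) (auto intro: order_trans[OF degree_monom_le])

lemma higher_pderiv_eq_0: "degree p < n \<Longrightarrow> (pderiv ^^ n) p = 0"
  by (intro poly_eqI) (simp add: coeff_higher_pderiv coeff_eq_0)

lemma has_integral_poly:
  fixes A p :: "real poly"
  assumes "pderiv A = p" "a \<le> b"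
  shows "(poly p has_integral (poly A b - poly A a)) {a..b}"
proof -
  have "\<And>x. (poly A has_vector_derivative poly p x) (at x within {a..b})"
    using poly_DERIV[of A] assms(1)
    by (metis has_field_derivative_at_within has_real_derivative_iff_has_vector_derivative)
  then show ?thesis using fundamental_theorem_of_calculus[OF assms(2)] by blast
qed

lemma integrable_poly [simp]: "poly (p::real poly) integrable_on {a..b}"
  by (intro integrable_continuous_real continuous_on_poly continuous_on_id)

definition poly_integral :: "real poly \<Rightarrow> real" where
  "poly_integral p = integral {-1..1} (poly p)"

lemma poly_integral_pderiv: "poly_integral (pderiv A) = poly A 1 - poly A (-1)"
  unfolding poly_integral_def using has_integral_poly[of A "pderiv A" "-1" 1]
  by (simp add: integral_unique)

lemma poly_integral_const: "poly_integral [:c:] = 2 * c"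
  using poly_integral_pderiv[of "[:0, c:]"] by (simp add: pderiv_pCons)

lemma poly_integral_add: "poly_integral (p + q) = poly_integral p + poly_integral q"
  unfolding poly_integral_def poly_add[abs_def] by (simp add: integral_add)

lemma poly_integral_diff: "poly_integral (p - q) = poly_integral p - poly_integral q"
  unfolding poly_integral_def poly_diff[abs_def] by (simp add: integral_diff)

lemma poly_integral_minus: "poly_integral (- p) = - poly_integral p"
  unfolding poly_integral_def poly_minus[abs_def] by (simp add: integral_neg)

lemma poly_integral_smult: "poly_integral (smult c p) = c * poly_integral p"
  unfolding poly_integral_def poly_smult[abs_def] by simp

lemma poly_integral_0 [simp]: "poly_integral 0 = 0"
  using poly_integral_const[of 0] by simp

lemma poly_integral_by_parts:
  "poly_integral (pderiv A * B) =
     poly A 1 * poly B 1 - poly A (-1) * poly B (-1) - poly_integral (A * pderiv B)"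
  using poly_integral_pderiv[of "A * B"]
  by (simp add: pderiv_mult poly_integral_add algebra_simps)

lemma poly_integral_by_parts_iter:
  assumes vanish: "\<And>m. m < n \<Longrightarrow> poly ((pderiv ^^ m) R) 1 = 0 \<and> poly ((pderiv ^^ m) R) (-1) = 0"
    and "i \<le> n"
  shows "poly_integral (q * (pderiv ^^ n) R) =
           (-1) ^ i * poly_integral ((pderiv ^^ i) q * (pderiv ^^ (n - i)) R)"
  using \<open>i \<le> n\<close>
proof (induct i)
  case (Suc i)
  define A where "A = (pderiv ^^ (n - Suc i)) R"
  define B where "B = (pderiv ^^ i) q"
  have "n - i = Suc (n - Suc i)" using Suc.prems by simp
  then have A: "(pderiv ^^ (n - i)) R = pderiv A" unfolding A_def by simp
  have "poly A 1 = 0" "poly A (-1) = 0"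
    using vanish[of "n - Suc i"] Suc.prems unfolding A_def by auto
  then have "poly_integral (B * pderiv A) = - poly_integral (pderiv B * A)"
    using poly_integral_by_parts[of A B] by (simp add: mult.commute)
  then show ?case using Suc by (simp add: A B_def A_def)
qed simp

section \<open>Legendre polynomials\<close>

definition rodrigues_poly :: "nat \<Rightarrow> real poly" where
  "rodrigues_poly n = [:-1, 0, 1:] ^ n"

definition legendre_poly :: "nat \<Rightarrow> real poly" where
  "legendre_poly n = smult (1 / (2 ^ n * fact n)) ((pderiv ^^ n) (rodrigues_poly n))"

lemma dvd_pderiv_linear_power:
  fixes A :: "'a::idom poly"
  assumes "[:-a, 1:] ^ Suc k dvd A"
  shows "[:-a, 1:] ^ k dvd pderiv A"
proof -
  obtain h where h: "A = [:-a, 1:] ^ Suc k * h" using assms by (auto elim: dvdE)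
  have "pderiv A = [:-a, 1:] ^ k * ([:-a, 1:] * pderiv h + smult (of_nat (Suc k)) h)"
    unfolding h pderiv_mult pderiv_power_Suc by (simp add: pderiv_pCons algebra_simps)
  then show ?thesis by simp
qed

lemma dvd_higher_pderiv_linear_power:
  fixes A :: "'a::idom poly"
  assumes "[:-a, 1:] ^ n dvd A" "m \<le> n"
  shows "[:-a, 1:] ^ (n - m) dvd (pderiv ^^ m) A"
  using \<open>m \<le> n\<close>
proof (induct m)
  case (Suc m)
  then have "[:-a, 1:] ^ Suc (n - Suc m) dvd (pderiv ^^ m) A"
    by (metis Suc_diff_Suc Suc_le_lessD less_imp_le_nat)
  then show ?case by (simp add: dvd_pderiv_linear_power)
qed (simp add: assms)

lemma higher_pderiv_rodrigues_poly_endpoints: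
  assumes "m < n"
  shows "poly ((pderiv ^^ m) (rodrigues_poly n)) 1 = 0"
    and "poly ((pderiv ^^ m) (rodrigues_poly n)) (-1) = 0"
proof -
  have root: "poly ((pderiv ^^ m) (rodrigues_poly n)) c = 0" if "[:-c, 1:] ^ n dvd rodrigues_poly n" for c
  proof -
    have "[:-c, 1:] ^ (n - m) dvd (pderiv ^^ m) (rodrigues_poly n)"
      using that assms by (intro dvd_higher_pderiv_linear_power) auto
    moreover have "[:-c, 1:] dvd [:-c, 1:] ^ (n - m)" using assms by (intro dvd_power) auto
    ultimately show ?thesis unfolding poly_eq_0_iff_dvd by (rule dvd_trans[rotated])
  qed
  have "rodrigues_poly n = [:-1, 1:] ^ n * [:-(-1), 1:] ^ n"
    unfolding rodrigues_poly_def by (simp flip: power_mult_distrib)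
  then show "poly ((pderiv ^^ m) (rodrigues_poly n)) 1 = 0"
    and "poly ((pderiv ^^ m) (rodrigues_poly n)) (-1) = 0"
    by (metis root dvd_triv_left dvd_triv_right)+
qed

lemma higher_pderiv_linear_power:
  "(pderiv ^^ j) ([:-1, 1:] ^ m :: real poly) =
     (if j \<le> m then smult (fact m / fact (m - j)) ([:-1, 1:] ^ (m - j)) else 0)"
proof (induct j)
  case (Suc j)
  show ?case
  proof (cases "Suc j \<le> m")
    case True
    then have mj: "m - j = Suc (m - Suc j)" by simp
    have "(pderiv ^^ Suc j) ([:-1, 1:] ^ m :: real poly) =
           smult (fact m / fact (m - j)) (pderiv ([:-1, 1:] ^ Suc (m - Suc j)))"
      using Suc True by (simp add: pderiv_smult mj)
    also have "\<dots> = smult (fact m / fact (m - j) * of_nat (m - j)) ([:-1, 1:] ^ (m - Suc j))"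
      unfolding pderiv_power_Suc by (simp add: pderiv_pCons mj)
    also have "fact m / fact (m - j) * of_nat (m - j) = (fact m / fact (m - Suc j) :: real)"
      by (simp add: mj)
    finally show ?thesis using True by simp
  next
    case False
    then consider "j = m" | "Suc j > Suc m" by linarith
    then show ?thesis using Suc False by cases (simp_all add: pderiv_smult)
  qed
qed simp

lemma rodrigues_poly_expand:
  "rodrigues_poly n = (\<Sum>k\<le>n. smult (real (n choose k) * 2 ^ (n - k)) ([:-1, 1:] ^ (n + k)))"
proof -
  have "[:-1, 0, 1:] = [:-1, 1:] * ([:-1, 1:] + [:2::real:])" by simp
  then have "rodrigues_poly n = [:-1, 1:] ^ n * ([:-1, 1:] + [:2:]) ^ n"
    unfolding rodrigues_poly_def by (simp only: power_mult_distrib)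
  also have "\<dots> = [:-1, 1:] ^ n * (\<Sum>k\<le>n. of_nat (n choose k) * [:-1, 1:] ^ k * [:2:] ^ (n - k))"
    by (simp only: binomial_ring)
  also have "\<dots> = (\<Sum>k\<le>n. smult (real (n choose k) * 2 ^ (n - k)) ([:-1, 1:] ^ (n + k)))"
    unfolding sum_distrib_left
    by (intro sum.cong refl) (simp add: poly_const_pow of_nat_poly power_add algebra_simps)
  finally show ?thesis .
qed

lemma legendreP_eq_poly: "legendreP n x = poly (legendre_poly n) x"
proof -
  have "(pderiv ^^ n) (rodrigues_poly n) =
          (\<Sum>k\<le>n. smult (real (n choose k) * 2 ^ (n - k) * (fact (n + k) / fact k)) ([:-1, 1:] ^ k))"
    unfolding rodrigues_poly_expand higher_pderiv_sum higher_pderiv_smult higher_pderiv_linear_power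
    by (intro sum.cong refl) auto
  then have "poly (legendre_poly n) x =
      (\<Sum>k\<le>n. real (n choose k) * 2 ^ (n - k) * (fact (n + k) / fact k) * (x - 1) ^ k / (2 ^ n * fact n))"
    unfolding legendre_poly_def by (simp add: poly_sum sum_divide_distrib)
  also have "\<dots> = legendreP n x"
    unfolding legendreP_def
  proof (intro sum.cong refl)
    fix k assume k: "k \<in> {..n}"
    have b: "real ((n + k) choose k) = fact (n + k) / (fact k * fact n)"
      using binomial_fact[of k "n + k"] by simp
    have p: "(2::real) ^ n = 2 ^ (n - k) * 2 ^ k" using k by (simp flip: power_add)
    show "real (n choose k) * 2 ^ (n - k) * (fact (n + k) / fact k) * (x - 1) ^ k / (2 ^ n * fact n) =
          real (n choose k) * real ((n + k) choose k) * ((x - 1) / 2) ^ k"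
      unfolding b p by (simp add: power_divide field_simps)
  qed
  finally show ?thesis by simp
qed

lemma degree_legendre_poly: "degree (legendre_poly n) \<le> n"
proof -
  have "degree (rodrigues_poly n) \<le> 2 * n"
    unfolding rodrigues_poly_def using degree_power_le[of "[:-1, 0, 1::real:]" n] by simp
  then show ?thesis unfolding legendre_poly_def by (simp add: degree_higher_pderiv)
qed

lemma poly_integral_legendre_poly_orth: "degree q < n \<Longrightarrow> poly_integral (q * legendre_poly n) = 0"
proof -
  assume q: "degree q < n"
  have "poly_integral (q * (pderiv ^^ n) (rodrigues_poly n)) =
          (-1) ^ n * poly_integral ((pderiv ^^ n) q * (pderiv ^^ (n - n)) (rodrigues_poly n))"
    by (rule poly_integral_by_parts_iter) (auto intro: higher_pderiv_rodrigues_poly_endpoints)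
  then show ?thesis
    unfolding legendre_poly_def
    by (simp add: higher_pderiv_eq_0[OF q] poly_integral_smult mult_smult_right)
qed

lemma poly_integral_one_minus_sq_power_Suc:
  "poly_integral ([:1, 0, -1:] ^ Suc n) =
     (2 * real n + 2) / (2 * real n + 3) * poly_integral ([:1, 0, -1:] ^ n)"
proof -
  define W where "W = [:1, 0, -1::real:]"
  define X where "X = [:0, 1::real:]"
  have "pderiv (W ^ Suc n) = - smult (2 * (real n + 1)) (X * W ^ n)"
    unfolding pderiv_power_Suc by (simp add: W_def X_def pderiv_pCons algebra_simps)
  then have XW: "X * W ^ n = smult (-1 / (2 * (real n + 1))) (pderiv (W ^ Suc n))"
    by (simp add: field_simps)
  have "poly_integral (pderiv (W ^ Suc n) * X) = - poly_integral (W ^ Suc n)"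
    unfolding poly_integral_by_parts by (simp add: W_def X_def pderiv_pCons)
  then have "poly_integral (X * (X * W ^ n)) = poly_integral (W ^ Suc n) / (2 * (real n + 1))"
    unfolding XW by (simp add: poly_integral_smult poly_integral_minus mult.commute mult_smult_left)
  moreover have "p * W = p - X * (X * p)" for p
    by (simp add: W_def X_def algebra_simps mult_pCons_right mult_pCons_left)
  then have "W ^ Suc n = W ^ n - X * (X * W ^ n)"
    by (simp only: power_Suc2)
  ultimately have "poly_integral (W ^ Suc n) =
      poly_integral (W ^ n) - poly_integral (W ^ Suc n) / (2 * (real n + 1))"
    by (simp add: poly_integral_diff)
  then show ?thesis unfolding W_def by (simp add: field_simps)
qed

lemma fact_mult_poly_integral_one_minus_sq_power:
  "fact (2 * n) * poly_integral ([:1, 0, -1:] ^ n) = 2 / (2 * n + 1) * 4 ^ n * (fact n) ^ 2"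
proof (induct n)
  case 0
  show ?case using poly_integral_const[of 1] by (simp add: one_pCons)
next
  case (Suc n)
  let ?I = "\<lambda>n. poly_integral ([:1, 0, -1:] ^ n)"
  have IH: "fact (2 * n) * ?I n * (2 * real n + 1) = 2 * 4 ^ n * (fact n) ^ 2"
    using Suc by simp
  have "fact (2 * Suc n) = (fact (2 * n) :: real) * (2 * real n + 1) * (2 * real n + 2)"
    by (simp add: algebra_simps)
  then have "fact (2 * Suc n) * ?I (Suc n) =
      fact (2 * n) * ?I n * (2 * real n + 1) * ((2 * real n + 2) * (2 * real n + 2)) / (2 * real n + 3)"
    unfolding poly_integral_one_minus_sq_power_Suc by simp
  also have "\<dots> = 2 * 4 ^ n * (fact n) ^ 2 * ((2 * real n + 2) * (2 * real n + 2)) / (2 * real n + 3)"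
    unfolding IH ..
  also have "\<dots> = 2 * (4 ^ Suc n * (fact (Suc n)) ^ 2) / (2 * real n + 3)"
    by (simp add: algebra_simps power2_eq_square)
  also have "\<dots> = 2 / (2 * real (Suc n) + 1) * 4 ^ Suc n * (fact (Suc n)) ^ 2"
    by (simp add: add_ac)
  finally show ?case .
qed

lemma higher_pderiv_rodrigues_poly_top: "(pderiv ^^ (2 * n)) (rodrigues_poly n) = [:fact (2 * n):]"
proof -
  have "(pderiv ^^ (2 * n)) (rodrigues_poly n) = (\<Sum>k\<le>n. if k = n then [:fact (2 * n):] else 0)"
    unfolding rodrigues_poly_expand higher_pderiv_sum higher_pderiv_smult higher_pderiv_linear_power
    by (intro sum.cong refl) (auto simp: mult_2)
  then show ?thesis by simp
qed

lemma poly_integral_legendre_poly_sq: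
  "poly_integral (legendre_poly n * legendre_poly n) = 2 / (2 * real n + 1)"
proof -
  define D where "D = (pderiv ^^ n) (rodrigues_poly n)"
  have "poly_integral (D * D) =
          (-1) ^ n * poly_integral ((pderiv ^^ n) D * (pderiv ^^ (n - n)) (rodrigues_poly n))"
    unfolding D_def
    by (rule poly_integral_by_parts_iter) (auto intro: higher_pderiv_rodrigues_poly_endpoints)
  also have "(pderiv ^^ n) D = [:fact (2 * n):]"
    unfolding D_def using higher_pderiv_rodrigues_poly_top[of n] by (simp add: mult_2 funpow_add)
  also have "rodrigues_poly n = smult ((-1) ^ n) ([:1, 0, -1:] ^ n)"
    unfolding rodrigues_poly_def by (simp flip: smult_power)
  finally have "poly_integral (D * D) = fact (2 * n) * poly_integral ([:1, 0, -1:] ^ n)"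
    by (simp add: poly_integral_smult flip: power_mult_distrib)
  then have "poly_integral (legendre_poly n * legendre_poly n) =
      2 / (2 * n + 1) * 4 ^ n * (fact n) ^ 2 / (2 ^ n * fact n) ^ 2"
    unfolding legendre_poly_def D_def[symmetric] fact_mult_poly_integral_one_minus_sq_power
    by (simp add: poly_integral_smult power2_eq_square mult_smult_left mult_smult_right)
  moreover have "(2::real) ^ n * 2 ^ n = 4 ^ n"
    by (simp flip: power_mult_distrib)
  then have "((2::real) ^ n * fact n) ^ 2 = 4 ^ n * (fact n) ^ 2"
    by (simp add: power2_eq_square algebra_simps)
  ultimately show ?thesis by simp
qed

definition orthonormal_legendre_poly :: "nat \<Rightarrow> real poly" where
  "orthonormal_legendre_poly k = smult (sqrt ((2 * real k + 1) / 2)) (legendre_poly k)"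

lemma legendre_on_eq_poly: "legendre_on k x = poly (orthonormal_legendre_poly k) x"
  unfolding legendre_on_def orthonormal_legendre_poly_def by (simp add: legendreP_eq_poly)

lemma poly_integral_orthonormal_legendre_poly_sq:
  "poly_integral (orthonormal_legendre_poly k * orthonormal_legendre_poly k) = 1"
  unfolding orthonormal_legendre_poly_def
  by (simp add: poly_integral_smult mult_smult_left mult_smult_right poly_integral_legendre_poly_sq)

lemma poly_integral_orthonormal_legendre_poly_orth:
  "degree q < k \<Longrightarrow> poly_integral (q * orthonormal_legendre_poly k) = 0"
  unfolding orthonormal_legendre_poly_def
  by (simp add: poly_integral_smult mult_smult_right poly_integral_legendre_poly_orth)

lemma degree_orthonormal_legendre_poly: "degree (orthonormal_legendre_poly k) \<le> k"
  unfolding orthonormal_legendre_poly_def using degree_legendre_poly[of k] by simp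

lemma integral_abs_orthonormal_legendre_poly_le:
  "integral {-1..1} (\<lambda>x. \<bar>poly (orthonormal_legendre_poly k) x\<bar>) \<le> 3 / 2"
proof -
  let ?p = "orthonormal_legendre_poly k"
  have "integral {-1..1} (\<lambda>x. \<bar>poly ?p x\<bar>) \<le> integral {-1..1} (poly ([:1/2:] + smult (1/2) (?p * ?p)))"
  proof (rule integral_le)
    show "(\<lambda>x. \<bar>poly ?p x\<bar>) integrable_on {-1..1}"
      by (intro integrable_continuous_real continuous_intros continuous_on_poly)
    fix x
    have "0 \<le> (\<bar>poly ?p x\<bar> - 1) ^ 2" by simp
    then show "\<bar>poly ?p x\<bar> \<le> poly ([:1/2:] + smult (1/2) (?p * ?p)) x"
      by (simp add: power2_eq_square algebra_simps abs_mult_self_eq)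
  qed simp
  also have "\<dots> = 3 / 2"
    using poly_integral_orthonormal_legendre_poly_sq[of k]
    by (simp add: poly_integral_def[symmetric] poly_integral_add poly_integral_smult poly_integral_const)
  finally show ?thesis .
qed

section \<open>Entries of the coefficient matrix\<close>

definition legendre_antideriv :: "nat \<Rightarrow> real poly" where
  "legendre_antideriv l = poly_antideriv (orthonormal_legendre_poly l)
     - [:poly (poly_antideriv (orthonormal_legendre_poly l)) (-1):]"

lemma pderiv_legendre_antideriv [simp]: "pderiv (legendre_antideriv l) = orthonormal_legendre_poly l"
  unfolding legendre_antideriv_def by (simp add: pderiv_diff pderiv_pCons)

lemma poly_legendre_antideriv_minus_one [simp]: "poly (legendre_antideriv l) (-1) = 0"
  unfolding legendre_antideriv_def by simp

lemma poly_legendre_antideriv_one: "l \<ge> 1 \<Longrightarrow> poly (legendre_antideriv l) 1 = 0"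
  using poly_integral_pderiv[of "legendre_antideriv l"]
    poly_integral_orthonormal_legendre_poly_orth[of 1 l]
  by simp

lemma degree_legendre_antideriv: "degree (legendre_antideriv l) \<le> l + 1"
proof -
  have "degree (legendre_antideriv l) \<le> degree (poly_antideriv (orthonormal_legendre_poly l))"
    unfolding legendre_antideriv_def by (rule order_trans[OF degree_diff_le_max]) simp
  also have "\<dots> \<le> l + 1"
    using degree_poly_antideriv[of "orthonormal_legendre_poly l"] degree_orthonormal_legendre_poly[of l]
    by simp
  finally show ?thesis .
qed

lemma poly_integral_legendre_antideriv_orth:
  assumes "degree g + 2 \<le> l"
  shows "poly_integral (g * legendre_antideriv l) = 0"
proof -
  define G where "G = poly_antideriv g"
  have "degree G < l" using degree_poly_antideriv[of g] assms unfolding G_def by simp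
  moreover have "poly_integral (g * legendre_antideriv l) = - poly_integral (G * orthonormal_legendre_poly l)"
    using poly_integral_by_parts[of G "legendre_antideriv l"] poly_legendre_antideriv_one[of l] assms
    by (simp add: G_def)
  ultimately show ?thesis by (simp add: poly_integral_orthonormal_legendre_poly_orth)
qed

lemma has_integral_legendre_antideriv:
  "-1 \<le> t \<Longrightarrow> (poly (orthonormal_legendre_poly l) has_integral poly (legendre_antideriv l) t) {-1..t}"
  using has_integral_poly[of "legendre_antideriv l" "orthonormal_legendre_poly l" "-1" t] by simp

lemma abs_poly_legendre_antideriv_le:
  assumes "t \<in> {-1..1}"
  shows "\<bar>poly (legendre_antideriv l) t\<bar> \<le> 3 / 2"
proof -
  let ?p = "orthonormal_legendre_poly l"
  have int: "(\<lambda>x. \<bar>poly ?p x\<bar>) integrable_on {a..b}" for a b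
    by (intro integrable_continuous_real continuous_intros continuous_on_poly)
  have "poly (legendre_antideriv l) t = integral {-1..t} (poly ?p)"
    using has_integral_legendre_antideriv[of t l] assms by (simp add: integral_unique)
  then have "\<bar>poly (legendre_antideriv l) t\<bar> \<le> integral {-1..t} (\<lambda>x. \<bar>poly ?p x\<bar>)"
    using integral_norm_bound_integral[of "poly ?p" "{-1..t}" "\<lambda>x. \<bar>poly ?p x\<bar>"] int by simp
  also have "\<dots> \<le> integral {-1..1} (\<lambda>x. \<bar>poly ?p x\<bar>)"
    using assms int by (intro integral_subset_le) auto
  also have "\<dots> \<le> 3 / 2" by (rule integral_abs_orthonormal_legendre_poly_le)
  finally show ?thesis .
qed

lemma coeff_matrix_heaviside_eq:
  "coeff_matrix (\<lambda>t s. f t * heaviside (t - s)) k l =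
     integral {-1..1} (\<lambda>t. f t * poly (orthonormal_legendre_poly k) t * poly (legendre_antideriv l) t)"
  unfolding coeff_matrix_def
proof (rule integral_cong)
  fix t :: real assume t: "t \<in> {-1..1}"
  let ?p = "orthonormal_legendre_poly"
  have "(\<lambda>\<rho>. f t * heaviside (t - \<rho>) * legendre_on k t * legendre_on l \<rho>) =
        (\<lambda>\<rho>. (f t * poly (?p k) t) * (if \<rho> \<in> {..t} then poly (?p l) \<rho> else 0))"
    by (auto simp: heaviside_def legendre_on_eq_poly)
  moreover have "{-1..1} \<inter> {..t} = {-1..t}" using t by auto
  then have "integral {-1..1} (\<lambda>\<rho>. if \<rho> \<in> {..t} then poly (?p l) \<rho> else 0) = integral {-1..t} (poly (?p l))"
    by (subst integral_restrict_Int) (use t in \<open>simp add: Int_commute min_def\<close>)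
  ultimately show "integral {-1..1} (\<lambda>\<rho>. f t * heaviside (t - \<rho>) * legendre_on k t * legendre_on l \<rho>) =
       f t * poly (?p k) t * poly (legendre_antideriv l) t"
    using has_integral_legendre_antideriv[of t l] t by (simp add: integral_unique)
qed

lemma poly_integral_legendre_triple_eq_0:
  assumes "degree q + l + 1 < k \<or> degree q + k + 2 \<le> l"
  shows "poly_integral (q * orthonormal_legendre_poly k * legendre_antideriv l) = 0"
  using assms
proof
  assume "degree q + l + 1 < k"
  then have "degree (q * legendre_antideriv l) < k"
    using degree_mult_le[of q "legendre_antideriv l"] degree_legendre_antideriv[of l] by linarith
  then have "poly_integral ((q * legendre_antideriv l) * orthonormal_legendre_poly k) = 0"
    by (rule poly_integral_orthonormal_legendre_poly_orth)
  then show ?thesis by (simp add: ac_simps)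
next
  assume "degree q + k + 2 \<le> l"
  then have "degree (q * orthonormal_legendre_poly k) + 2 \<le> l"
    using degree_mult_le[of q "orthonormal_legendre_poly k"] degree_orthonormal_legendre_poly[of k]
    by linarith
  then have "poly_integral ((q * orthonormal_legendre_poly k) * legendre_antideriv l) = 0"
    by (rule poly_integral_legendre_antideriv_orth)
  then show ?thesis by (simp add: ac_simps)
qed

lemma abs_coeff_matrix_heaviside_le:
  assumes cont: "continuous_on {-1..1} f"
    and approx: "\<And>x. x \<in> {-1..1} \<Longrightarrow> \<bar>f x - poly q x\<bar> \<le> E"
    and orth: "poly_integral (q * orthonormal_legendre_poly k * legendre_antideriv l) = 0"
  shows "\<bar>coeff_matrix (\<lambda>t s. f t * heaviside (t - s)) k l\<bar> \<le> 9 / 4 * E"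
proof -
  let ?p = "orthonormal_legendre_poly k" and ?Q = "legendre_antideriv l"
  have "0 \<le> E" using approx[of 0] by auto
  have int: "(\<lambda>t. (f t - poly q t) * poly ?p t * poly ?Q t) integrable_on {-1..1}"
    by (intro integrable_continuous_real continuous_intros continuous_on_poly cont)
  have "coeff_matrix (\<lambda>t s. f t * heaviside (t - s)) k l =
        integral {-1..1} (\<lambda>t. (f t - poly q t) * poly ?p t * poly ?Q t + poly (q * ?p * ?Q) t)"
    unfolding coeff_matrix_heaviside_eq by (intro integral_cong) (simp add: algebra_simps)
  also have "\<dots> = integral {-1..1} (\<lambda>t. (f t - poly q t) * poly ?p t * poly ?Q t)
                    + poly_integral (q * ?p * ?Q)"
    unfolding poly_integral_def by (rule integral_add[OF int integrable_poly])
  also have "\<dots> = integral {-1..1} (\<lambda>t. (f t - poly q t) * poly ?p t * poly ?Q t)"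
    using orth by simp
  also have "\<bar>\<dots>\<bar> \<le> integral {-1..1} (\<lambda>t. (E * (3/2)) * \<bar>poly ?p t\<bar>)"
  proof (rule integral_norm_bound_integral[OF int, unfolded real_norm_def])
    show "(\<lambda>t. (E * (3/2)) * \<bar>poly ?p t\<bar>) integrable_on {-1..1}"
      by (intro integrable_continuous_real continuous_intros continuous_on_poly)
    fix t :: real assume t: "t \<in> {-1..1}"
    have "\<bar>f t - poly q t\<bar> * \<bar>poly ?Q t\<bar> \<le> E * (3/2)"
      using approx[OF t] abs_poly_legendre_antideriv_le[OF t, of l] \<open>0 \<le> E\<close> by (intro mult_mono) auto
    then have "\<bar>f t - poly q t\<bar> * \<bar>poly ?Q t\<bar> * \<bar>poly ?p t\<bar> \<le> E * (3/2) * \<bar>poly ?p t\<bar>"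
      by (rule mult_right_mono) simp
    then show "\<bar>(f t - poly q t) * poly ?p t * poly ?Q t\<bar> \<le> (E * (3/2)) * \<bar>poly ?p t\<bar>"
      by (simp add: abs_mult ac_simps)
  qed
  also have "\<dots> = (E * (3/2)) * integral {-1..1} (\<lambda>t. \<bar>poly ?p t\<bar>)" by simp
  also have "\<dots> \<le> (E * (3/2)) * (3/2)"
    using integral_abs_orthonormal_legendre_poly_le[of k] \<open>0 \<le> E\<close> by (intro mult_left_mono) auto
  finally show ?thesis by simp
qed

section \<open>Holomorphic extension of real analytic functions\<close>

definition local_powser :: "(nat \<Rightarrow> real) \<Rightarrow> real \<Rightarrow> complex \<Rightarrow> complex" where
  "local_powser a x z = (\<Sum>n. complex_of_real (a n) * (z - of_real x) ^ n)"

context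
  fixes a :: "nat \<Rightarrow> real" and x r :: real and f :: "real \<Rightarrow> real"
  assumes sums_f: "\<forall>y. \<bar>y - x\<bar> < r \<longrightarrow> (\<lambda>n. a n * (y - x) ^ n) sums f y"
begin

lemma summable_local_powser:
  assumes "norm w < r"
  shows "summable (\<lambda>n. complex_of_real (a n) * w ^ n)"
proof -
  define t where "t = (norm w + r) / 2"
  have "norm w < t" "t < r" unfolding t_def using assms by simp_all
  moreover have "0 < t" using \<open>norm w < t\<close> norm_ge_zero[of w] by linarith
  ultimately have "(\<lambda>n. a n * ((x + t) - x) ^ n) sums f (x + t)"
    using sums_f[rule_format, of "x + t"] by simp
  then have "summable (\<lambda>n. a n * t ^ n)" by (simp add: sums_summable)
  then have "summable (\<lambda>n. complex_of_real (a n * t ^ n))" by (simp only: summable_complex_of_real)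
  then have "summable (\<lambda>n. complex_of_real (a n) * complex_of_real t ^ n)" by simp
  from powser_insidea[OF this, of w] \<open>norm w < t\<close> \<open>0 < t\<close>
  have "summable (\<lambda>n. norm (complex_of_real (a n) * w ^ n))" by simp
  then show ?thesis by (rule summable_norm_cancel)
qed

lemma local_powser_has_field_derivative:
  assumes "norm (z - of_real x) < r"
  shows "\<exists>D. (local_powser a x has_field_derivative D) (at z)"
proof -
  have "((\<lambda>w. \<Sum>n. complex_of_real (a n) * w ^ n) has_field_derivative
          (\<Sum>n. diffs (\<lambda>n. complex_of_real (a n)) n * (z - of_real x) ^ n)) (at (z - of_real x))"
    by (rule termdiffs_strong') (use summable_local_powser assms in auto)
  then have "(local_powser a x has_field_derivative
          (\<Sum>n. diffs (\<lambda>n. complex_of_real (a n)) n * (z - of_real x) ^ n) * 1) (at z)"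
    unfolding local_powser_def by (rule DERIV_chain2) (auto intro!: derivative_eq_intros)
  then show ?thesis by blast
qed

lemma holomorphic_local_powser: "local_powser a x holomorphic_on ball (of_real x) r"
  unfolding holomorphic_on_open[OF open_ball]
  using local_powser_has_field_derivative by (auto simp: dist_norm norm_minus_commute)

lemma local_powser_of_real:
  assumes "\<bar>y - x\<bar> < r"
  shows "local_powser a x (of_real y) = of_real (f y)"
proof -
  have "(\<lambda>n. complex_of_real (a n * (y - x) ^ n)) sums complex_of_real (f y)"
    using sums_f assms by (simp only: sums_of_real_iff)
  then show ?thesis
    unfolding local_powser_def by (intro sums_unique[symmetric]) simp
qed

end

lemma of_real_islimpt_Reals: "complex_of_real y islimpt \<real>"
  unfolding islimpt_approachable
proof (intro allI impI)
  fix e :: real assume "e > 0"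
  moreover have "dist (complex_of_real (y + e / 2)) (of_real y) = e / 2"
    using \<open>e > 0\<close> by (simp add: dist_norm norm_divide)
  ultimately show "\<exists>x'\<in>\<real>. x' \<noteq> complex_of_real y \<and> dist x' (complex_of_real y) < e"
    by (intro bexI[of _ "of_real (y + e / 2)"]) (auto simp del: of_real_add)
qed

text \<open>Identity theorem: the two expansions agree at the real points of the overlap, which
  accumulate at the real part of any of its points.\<close>
lemma local_powser_agree:
  assumes sums1: "\<forall>y. \<bar>y - x1\<bar> < r1 \<longrightarrow> (\<lambda>n. a1 n * (y - x1) ^ n) sums f y"
    and sums2: "\<forall>y. \<bar>y - x2\<bar> < r2 \<longrightarrow> (\<lambda>n. a2 n * (y - x2) ^ n) sums f y"
    and z: "z \<in> ball (of_real x1) r1 \<inter> ball (of_real x2) r2"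
  shows "local_powser a1 x1 z = local_powser a2 x2 z"
proof -
  define S where "S = ball (complex_of_real x1) r1 \<inter> ball (of_real x2) r2"
  have "open S" "connected S" unfolding S_def by (auto intro!: convex_connected convex_Int)
  have "dist (complex_of_real x) (of_real (Re z)) \<le> dist (of_real x) z" for x
    using abs_Re_le_cmod[of "of_real x - z"] by (simp add: dist_norm flip: of_real_diff)
  then have \<xi>: "of_real (Re z) \<in> S" using z unfolding S_def by (meson IntE IntI le_less_trans mem_ball)
  have lim: "of_real (Re z) islimpt (\<real> \<inter> S)"
    using \<open>open S\<close> \<xi> by (intro islimpt_Int_eventually of_real_islimpt_Reals eventually_at_in_open')
  have zero: "local_powser a1 x1 w - local_powser a2 x2 w = 0" if "w \<in> \<real> \<inter> S" for w
  proof -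
    from that obtain y where y: "w = of_real y" "\<bar>y - x1\<bar> < r1" "\<bar>y - x2\<bar> < r2"
      unfolding S_def
      by (auto elim!: Reals_cases simp: dist_norm abs_minus_commute simp flip: of_real_diff)
    then show ?thesis
      using local_powser_of_real[OF sums1] local_powser_of_real[OF sums2] by simp
  qed
  have hol: "(\<lambda>w. local_powser a1 x1 w - local_powser a2 x2 w) holomorphic_on S"
    unfolding S_def
    by (intro holomorphic_on_diff holomorphic_on_subset[OF holomorphic_local_powser[OF sums1]]
              holomorphic_on_subset[OF holomorphic_local_powser[OF sums2]]) auto
  have "local_powser a1 x1 z - local_powser a2 x2 z = 0"
    using analytic_continuation[OF hol \<open>open S\<close> \<open>connected S\<close> _ \<xi> lim zero] z
    by (auto simp: S_def)
  then show ?thesis by simp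
qed

lemma real_analytic_on_interval_choice:
  assumes "real_analytic_on_interval f"
  obtains r a where "\<And>x. x \<in> {-1..1} \<Longrightarrow> r x > 0"
    "\<And>x. x \<in> {-1..1} \<Longrightarrow> \<forall>y. \<bar>y - x\<bar> < r x \<longrightarrow> (\<lambda>n. a x n * (y - x) ^ n) sums f y"
proof -
  have "\<exists>r. \<forall>x\<in>{-1..1}. r x > 0 \<and>
      (\<exists>a. \<forall>y. \<bar>y - x\<bar> < r x \<longrightarrow> (\<lambda>n. a n * (y - x) ^ n) sums f y)"
    using assms unfolding real_analytic_on_interval_def by (rule bchoice)
  then obtain r where r: "\<forall>x\<in>{-1..1}. r x > 0 \<and>
      (\<exists>a. \<forall>y. \<bar>y - x\<bar> < r x \<longrightarrow> (\<lambda>n. a n * (y - x) ^ n) sums f y)" by blast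
  then have "\<forall>x\<in>{-1..1}. \<exists>a. \<forall>y. \<bar>y - x\<bar> < r x \<longrightarrow> (\<lambda>n. a n * (y - x) ^ n) sums f y"
    by blast
  then have "\<exists>a. \<forall>x\<in>{-1..1}. \<forall>y. \<bar>y - x\<bar> < r x \<longrightarrow> (\<lambda>n. a x n * (y - x) ^ n) sums f y"
    by (rule bchoice)
  then show ?thesis using that r by blast
qed

lemma real_analytic_on_interval_holomorphic_extension:
  assumes "real_analytic_on_interval f"
  obtains U F where "open U" "F holomorphic_on U"
    "\<And>x. x \<in> {-1..1} \<Longrightarrow> complex_of_real x \<in> U \<and> F (of_real x) = of_real (f x)"
proof -
  obtain r a where r: "\<And>x. x \<in> {-1..1} \<Longrightarrow> r x > 0"
    and sums_f: "\<And>x. x \<in> {-1..1} \<Longrightarrow> \<forall>y. \<bar>y - x\<bar> < r x \<longrightarrow> (\<lambda>n. a x n * (y - x) ^ n) sums f y"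
    using real_analytic_on_interval_choice[OF assms] by blast
  define B where "B x = ball (complex_of_real x) (r x)" for x
  define c where "c z = (SOME x. x \<in> {-1..1} \<and> z \<in> B x)" for z
  define F where "F z = local_powser (a (c z)) (c z) z" for z
  define U where "U = (\<Union>x\<in>{-1..1}. B x)"
  have F_local: "F z = local_powser (a x) x z" if x: "x \<in> {-1..1}" "z \<in> B x" for x z
  proof -
    have c: "c z \<in> {-1..1} \<and> z \<in> B (c z)" unfolding c_def by (rule someI[of _ x]) (use x in auto)
    then have "z \<in> ball (of_real (c z)) (r (c z)) \<inter> ball (of_real x) (r x)"
      using x by (simp add: B_def)
    then show ?thesis
      unfolding F_def using local_powser_agree[OF sums_f sums_f] c x by blast
  qed
  have "open U" unfolding U_def B_def by auto
  moreover have "F holomorphic_on U"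
    unfolding holomorphic_on_open[OF \<open>open U\<close>]
  proof
    fix z assume "z \<in> U"
    then obtain x where x: "x \<in> {-1..1}" "z \<in> B x" unfolding U_def by auto
    then obtain D where "(local_powser (a x) x has_field_derivative D) (at z)"
      using local_powser_has_field_derivative[OF sums_f] by (auto simp: B_def dist_norm norm_minus_commute)
    then have "(F has_field_derivative D) (at z)"
      by (rule has_field_derivative_transform_within_open[of _ _ _ "B x"])
         (use x F_local in \<open>auto simp: B_def\<close>)
    then show "\<exists>D. (F has_field_derivative D) (at z)" by blast
  qed
  moreover have "complex_of_real x \<in> U \<and> F (of_real x) = of_real (f x)" if x: "x \<in> {-1..1}" for x
  proof -
    have "complex_of_real x \<in> B x" using r[OF x] by (simp add: B_def)
    then show ?thesis
      using x F_local local_powser_of_real[OF sums_f[OF x], of x] r[OF x] unfolding U_def by auto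
  qed
  ultimately show ?thesis using that by blast
qed

section \<open>Polynomial approximation by Cauchy's formula\<close>

lemma contour_integrable_rectpath:
  assumes "continuous_on (path_image (rectpath a b)) h"
  shows "h contour_integrable_on rectpath a b"
  using assms
  by (auto simp: rectpath_def Let_def path_image_join
           intro!: contour_integrable_continuous_linepath elim!: continuous_on_subset)

lemma norm_contour_integral_rectpath_le:
  assumes cont: "continuous_on (path_image (rectpath a b)) h"
    and bound: "\<And>z. z \<in> path_image (rectpath a b) \<Longrightarrow> cmod (h z) \<le> B" and "0 \<le> B"
  shows "cmod (contour_integral (rectpath a b) h) \<le> B * (4 * cmod (b - a))"
proof -
  define a2 where "a2 = Complex (Re b) (Im a)"
  define a4 where "a4 = Complex (Re a) (Im b)"
  have side: "cmod (contour_integral (linepath u v) h) \<le> B * cmod (b - a)"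
    if "closed_segment u v \<subseteq> path_image (rectpath a b)" "cmod (v - u) \<le> cmod (b - a)" for u v
  proof -
    have "cmod (contour_integral (linepath u v) h) \<le> B * cmod (v - u)"
      using that bound \<open>0 \<le> B\<close>
      by (intro contour_integral_bound_linepath contour_integrable_continuous_linepath
                continuous_on_subset[OF cont]) auto
    also have "\<dots> \<le> B * cmod (b - a)" using that(2) \<open>0 \<le> B\<close> by (rule mult_left_mono)
    finally show ?thesis .
  qed
  have image: "path_image (rectpath a b) =
          closed_segment a a2 \<union> closed_segment a2 b \<union> closed_segment b a4 \<union> closed_segment a4 a"
    by (simp add: rectpath_def Let_def path_image_join a2_def a4_def Un_assoc)
  moreover have "cmod (a2 - a) \<le> cmod (b - a)" "cmod (a4 - b) \<le> cmod (b - a)"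
       "cmod (b - a2) \<le> cmod (b - a)" "cmod (a - a4) \<le> cmod (b - a)"
    using abs_Re_le_cmod[of "b - a"] abs_Im_le_cmod[of "b - a"]
    by (simp_all add: a2_def a4_def cmod_def power2_commute)
  ultimately have bounds:
      "cmod (contour_integral (linepath a a2) h) \<le> B * cmod (b - a)"
      "cmod (contour_integral (linepath a2 b) h) \<le> B * cmod (b - a)"
      "cmod (contour_integral (linepath b a4) h) \<le> B * cmod (b - a)"
      "cmod (contour_integral (linepath a4 a) h) \<le> B * cmod (b - a)"
    by (auto intro!: side)
  have int: "h contour_integrable_on linepath u v"
    if "closed_segment u v \<subseteq> path_image (rectpath a b)" for u v
    using that by (intro contour_integrable_continuous_linepath continuous_on_subset[OF cont])
  have "h contour_integrable_on linepath a a2" "h contour_integrable_on linepath a2 b"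
       "h contour_integrable_on linepath b a4" "h contour_integrable_on linepath a4 a"
    by (rule int, unfold image, blast)+
  then have "contour_integral (rectpath a b) h =
          contour_integral (linepath a a2) h + (contour_integral (linepath a2 b) h +
          (contour_integral (linepath b a4) h + contour_integral (linepath a4 a) h))"
    unfolding rectpath_def Let_def a2_def[symmetric] a4_def[symmetric] by simp
  also have "cmod \<dots> \<le> B * cmod (b - a) + (B * cmod (b - a) + (B * cmod (b - a) + B * cmod (b - a)))"
    using bounds by (intro norm_triangle_le add_mono norm_triangle_ineq order_trans[OF norm_triangle_ineq]) auto
  finally show ?thesis by simp
qed

definition interval_rectangle :: "real \<Rightarrow> complex set" where
  "interval_rectangle \<delta> = cbox (Complex (-1 - \<delta>) (-\<delta>)) (Complex (1 + \<delta>) \<delta>)"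

definition interval_rectpath :: "real \<Rightarrow> real \<Rightarrow> complex" where
  "interval_rectpath \<delta> = rectpath (Complex (-1 - \<delta>) (-\<delta>)) (Complex (1 + \<delta>) \<delta>)"

lemma interval_rectangle_subset_open:
  assumes "open U" "\<And>x. x \<in> {-1..1} \<Longrightarrow> complex_of_real x \<in> U"
  obtains \<delta> where "0 < \<delta>" "\<delta> \<le> 1/2" "interval_rectangle \<delta> \<subseteq> U"
proof -
  have "compact (complex_of_real ` {-1..1})"
    by (intro compact_continuous_image continuous_intros) auto
  moreover have "complex_of_real ` {-1..1} \<subseteq> U" using assms(2) by blast
  ultimately obtain e where e: "e > 0" "(\<Union>x\<in>complex_of_real ` {-1..1}. ball x e) \<subseteq> U"
    using compact_subset_open_imp_ball_epsilon_subset[OF _ assms(1)] by blast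
  define \<delta> where "\<delta> = min (1/2) (e/3)"
  have \<delta>: "\<delta> > 0" "\<delta> \<le> 1/2" "2 * \<delta> < e" using e by (auto simp: \<delta>_def)
  have "z \<in> U" if "z \<in> interval_rectangle \<delta>" for z
  proof -
    define x where "x = max (-1) (min 1 (Re z))"
    have "\<bar>Re (z - of_real x)\<bar> \<le> \<delta>" "\<bar>Im (z - of_real x)\<bar> \<le> \<delta>"
      using that by (auto simp: x_def interval_rectangle_def in_cbox_complex_iff)
    then have "cmod (z - of_real x) < e" using cmod_le[of "z - of_real x"] \<delta> by linarith
    then show "z \<in> U" using e(2) by (force simp: x_def dist_norm norm_minus_commute)
  qed
  then show ?thesis using that \<delta> by blast
qed

lemma interval_rectpath_dist_bounds:
  assumes "0 < \<delta>" "\<delta> \<le> 1/2" "z \<in> path_image (interval_rectpath \<delta>)" "x \<in> {-1..1}"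
  shows "\<delta> \<le> cmod (z - of_real x)" "(cmod (z - of_real x)) ^ 2 \<le> 8"
proof -
  have "path_image (interval_rectpath \<delta>) = interval_rectangle \<delta> - box (Complex (-1 - \<delta>) (-\<delta>)) (Complex (1 + \<delta>) \<delta>)"
    unfolding interval_rectpath_def interval_rectangle_def
    using assms by (intro path_image_rectpath_cbox_minus_box) auto
  then have z: "-1-\<delta> \<le> Re z" "Re z \<le> 1+\<delta>" "-\<delta> \<le> Im z" "Im z \<le> \<delta>"
      and "\<not> (-1-\<delta> < Re z \<and> Re z < 1+\<delta> \<and> -\<delta> < Im z \<and> Im z < \<delta>)"
    using assms(3) by (auto simp: interval_rectangle_def in_cbox_complex_iff in_box_complex_iff)
  then show "\<delta> \<le> cmod (z - of_real x)"
    using assms(4) abs_Re_le_cmod[of "z - of_real x"] abs_Im_le_cmod[of "z - of_real x"] by auto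
  have "-(5/2) \<le> Re z - x" "Re z - x \<le> 5/2" "-(1/2) \<le> Im z" "Im z \<le> 1/2"
    using z assms by auto
  then have "\<bar>Re z - x\<bar> \<le> 5/2" "\<bar>Im z\<bar> \<le> 1/2" by (intro abs_leI; linarith)+
  then have "(Re z - x) ^ 2 \<le> (5/2) ^ 2" "(Im z) ^ 2 \<le> (1/2) ^ 2"
    by (metis abs_ge_zero power2_abs power_mono)+
  then show "(cmod (z - of_real x)) ^ 2 \<le> 8" unfolding cmod_power2 by (simp add: power_divide)
qed

lemma cauchy_integral_interval_rectpath:
  assumes "F holomorphic_on interval_rectangle \<delta>" "0 < \<delta>" "x \<in> {-1..1}"
  shows "((\<lambda>w. F w / (w - of_real x)) has_contour_integral (2 * pi * \<i> * F (of_real x)))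
           (interval_rectpath \<delta>)"
proof -
  let ?a = "Complex (-1 - \<delta>) (-\<delta>)" and ?b = "Complex (1 + \<delta>) \<delta>"
  have x: "complex_of_real x \<in> box ?a ?b" using assms by (auto simp: in_box_complex_iff)
  have "path_image (rectpath ?a ?b) \<subseteq> cbox ?a ?b - {of_real x}"
    using assms x by (auto simp: path_image_rectpath_cbox_minus_box)
  then have "((\<lambda>w. F w / (w - of_real x)) has_contour_integral
            (2 * pi * \<i> * winding_number (rectpath ?a ?b) (of_real x) * F (of_real x))) (rectpath ?a ?b)"
    using assms(1) x box_subset_cbox
    by (intro Cauchy_integral_formula_convex_simple[OF convex_box(1)]) (auto simp: interval_rectangle_def)
  then show ?thesis using winding_number_rectpath[OF x] by (simp add: interval_rectpath_def)
qed

text \<open>At a real point \<open>x\<close> the quadratic factor evaluates to \<open>1 - \<bar>z - x\<bar>\<^sup>2/8\<close>, so the kernel is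
  a truncated geometric series for \<open>cnj (z - x) / \<bar>z - x\<bar>\<^sup>2 = 1 / (z - x)\<close>.\<close>
definition inverse_kernel_poly :: "nat \<Rightarrow> complex \<Rightarrow> complex poly" where
  "inverse_kernel_poly N z = smult (1/8) ([:cnj z, -1:] *
     (\<Sum>n\<le>N. [:of_real (1 - (cmod z) ^ 2 / 8), of_real (Re z / 4), -1/8:] ^ n))"

lemma poly_inverse_kernel_poly:
  "poly (inverse_kernel_poly N z) (of_real x) =
     cnj (z - of_real x) * of_real ((\<Sum>n\<le>N. (1 - (cmod (z - of_real x)) ^ 2 / 8) ^ n) / 8)"
proof -
  have "(cmod (z - of_real x)) ^ 2 = (cmod z) ^ 2 - 2 * x * Re z + x ^ 2"
    unfolding cmod_power2 by (simp add: power2_eq_square algebra_simps)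
  then have T: "poly [:of_real (1 - (cmod z) ^ 2 / 8), of_real (Re z / 4), -1/8:] (of_real x) =
             complex_of_real (1 - (cmod (z - of_real x)) ^ 2 / 8)"
    by (simp add: complex_eq_iff field_simps power2_eq_square)
  show ?thesis
    unfolding inverse_kernel_poly_def poly_smult poly_mult poly_sum poly_power T
    by (simp add: algebra_simps)
qed

lemma degree_inverse_kernel_poly: "degree (inverse_kernel_poly N z) \<le> 2 * N + 1"
proof -
  let ?T = "[:of_real (1 - (cmod z) ^ 2 / 8), of_real (Re z / 4), -1/8:] :: complex poly"
  have "degree (?T ^ n) \<le> 2 * N" if "n \<le> N" for n
    using degree_power_le[of ?T n] that by simp
  then have "degree (\<Sum>n\<le>N. ?T ^ n) \<le> 2 * N" by (intro degree_sum_le) auto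
  then show ?thesis
    unfolding inverse_kernel_poly_def
    using degree_mult_le[of "[:cnj z, -1:]" "\<Sum>n\<le>N. ?T ^ n"] by simp
qed

lemma norm_inverse_minus_kernel_le:
  fixes w :: complex
  assumes "0 < \<delta>" "\<delta> \<le> cmod w" "(cmod w) ^ 2 \<le> 8"
  shows "cmod (1 / w - cnj w * of_real ((\<Sum>n\<le>N. (1 - (cmod w) ^ 2 / 8) ^ n) / 8))
           \<le> (1 - \<delta> ^ 2 / 8) ^ Suc N / \<delta>"
proof -
  define d where "d = cmod w"
  define t where "t = 1 - d ^ 2 / 8"
  have d: "0 < d" "\<delta> \<le> d" using assms unfolding d_def by linarith+
  have t: "0 \<le> t" "t \<le> 1 - \<delta> ^ 2 / 8"
    using assms d power_mono[of \<delta> d 2] by (auto simp: t_def d_def)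
  have S: "(\<Sum>n\<le>N. t ^ n) = (1 - t ^ Suc N) / (d ^ 2 / 8)"
    using sum_gp_strict[of t "Suc N"] d by (simp add: lessThan_Suc_atMost t_def)
  have inv: "1 / w = cnj w * of_real (1 / d ^ 2)"
    using complex_div_cnj[of 1 w] d by (simp add: d_def)
  have r: "1 / d ^ 2 - ((1 - t ^ Suc N) / (d ^ 2 / 8)) / 8 = t ^ Suc N / d ^ 2"
    using d by (simp add: field_simps)
  have "1 / w - cnj w * of_real ((\<Sum>n\<le>N. t ^ n) / 8) = cnj w * of_real (1 / d ^ 2 - (\<Sum>n\<le>N. t ^ n) / 8)"
    unfolding inv by (simp only: of_real_diff right_diff_distrib)
  also have "\<dots> = cnj w * of_real (t ^ Suc N / d ^ 2)" unfolding S r ..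
  finally have "cmod (1 / w - cnj w * of_real ((\<Sum>n\<le>N. t ^ n) / 8)) = cmod (cnj w) * \<bar>t ^ Suc N / d ^ 2\<bar>"
    by (simp only: norm_mult norm_of_real)
  also have "\<dots> = d * (t ^ Suc N / d ^ 2)" using t by (simp add: d_def)
  also have "\<dots> = t ^ Suc N / d" using d by (simp add: power2_eq_square)
  also have "\<dots> \<le> (1 - \<delta> ^ 2 / 8) ^ Suc N / \<delta>"
    using assms(1) d t by (intro frac_le power_mono) auto
  finally show ?thesis by (simp add: t_def d_def)
qed

definition continuous_coeffs_on :: "'a::topological_space set \<Rightarrow> ('a \<Rightarrow> complex poly) \<Rightarrow> bool" where
  "continuous_coeffs_on S P \<longleftrightarrow> (\<forall>j. continuous_on S (\<lambda>z. coeff (P z) j))"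

lemma continuous_coeffs_on_const: "continuous_coeffs_on S (\<lambda>z. p)"
  unfolding continuous_coeffs_on_def by simp

lemma continuous_coeffs_on_pCons:
  assumes "continuous_on S a" "continuous_coeffs_on S P"
  shows "continuous_coeffs_on S (\<lambda>z. pCons (a z) (P z))"
  unfolding continuous_coeffs_on_def
proof
  fix j show "continuous_on S (\<lambda>z. coeff (pCons (a z) (P z)) j)"
    using assms by (cases j) (auto simp: continuous_coeffs_on_def)
qed

lemma continuous_coeffs_on_add:
  "continuous_coeffs_on S P \<Longrightarrow> continuous_coeffs_on S Q \<Longrightarrow> continuous_coeffs_on S (\<lambda>z. P z + Q z)"
  unfolding continuous_coeffs_on_def by (auto intro!: continuous_intros)

lemma continuous_coeffs_on_mult:
  "continuous_coeffs_on S P \<Longrightarrow> continuous_coeffs_on S Q \<Longrightarrow> continuous_coeffs_on S (\<lambda>z. P z * Q z)"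
  unfolding continuous_coeffs_on_def coeff_mult by (auto intro!: continuous_intros)

lemma continuous_coeffs_on_smult:
  "continuous_coeffs_on S P \<Longrightarrow> continuous_coeffs_on S (\<lambda>z. smult c (P z))"
  unfolding continuous_coeffs_on_def by (auto intro!: continuous_intros)

lemma continuous_coeffs_on_power:
  "continuous_coeffs_on S P \<Longrightarrow> continuous_coeffs_on S (\<lambda>z. P z ^ n)"
  by (induct n) (auto intro: continuous_coeffs_on_mult continuous_coeffs_on_const)

lemma continuous_coeffs_on_sum:
  "(\<And>i. i \<in> A \<Longrightarrow> continuous_coeffs_on S (P i)) \<Longrightarrow> continuous_coeffs_on S (\<lambda>z. \<Sum>i\<in>A. P i z)"
  by (induct A rule: infinite_finite_induct)
     (auto intro: continuous_coeffs_on_add continuous_coeffs_on_const)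

lemma continuous_coeffs_on_inverse_kernel_poly: "continuous_coeffs_on S (inverse_kernel_poly N)"
  unfolding inverse_kernel_poly_def[abs_def]
  by (intro continuous_coeffs_on_smult continuous_coeffs_on_mult continuous_coeffs_on_sum
        continuous_coeffs_on_power continuous_coeffs_on_pCons continuous_coeffs_on_const continuous_intros)
     auto

lemma poly_eq_sum_if_degree_le:
  fixes p :: "'a::comm_semiring_1 poly"
  assumes "degree p \<le> D"
  shows "poly p y = (\<Sum>j\<le>D. coeff p j * y ^ j)"
  unfolding poly_altdef by (rule sum.mono_neutral_left) (use assms in \<open>auto simp: coeff_eq_0\<close>)

lemma has_contour_integral_inverse_kernel_poly:
  assumes "continuous_on (path_image (rectpath a b)) F"
  obtains c where "\<And>X. ((\<lambda>z. F z * poly (inverse_kernel_poly N z) X) has_contour_integral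
                      (\<Sum>j\<le>2 * N + 1. c j * X ^ j)) (rectpath a b)"
proof -
  define c where "c j = contour_integral (rectpath a b) (\<lambda>z. F z * coeff (inverse_kernel_poly N z) j)" for j
  have "((\<lambda>z. F z * coeff (inverse_kernel_poly N z) j) has_contour_integral c j) (rectpath a b)" for j
    using continuous_coeffs_on_inverse_kernel_poly[of "path_image (rectpath a b)" N] assms
    unfolding c_def continuous_coeffs_on_def
    by (intro has_contour_integral_integral contour_integrable_rectpath continuous_intros) auto
  then have sum_int: "((\<lambda>z. \<Sum>j\<le>2 * N + 1. F z * coeff (inverse_kernel_poly N z) j * X ^ j)
      has_contour_integral (\<Sum>j\<le>2 * N + 1. c j * X ^ j)) (rectpath a b)" for X
    by (intro has_contour_integral_sum has_contour_integral_rmul) auto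
  have eq: "(\<lambda>z. F z * poly (inverse_kernel_poly N z) X) =
      (\<lambda>z. \<Sum>j\<le>2 * N + 1. F z * coeff (inverse_kernel_poly N z) j * X ^ j)" for X
    unfolding poly_eq_sum_if_degree_le[OF degree_inverse_kernel_poly] sum_distrib_left mult.assoc ..
  show ?thesis
  proof (rule that)
    fix X show "((\<lambda>z. F z * poly (inverse_kernel_poly N z) X) has_contour_integral
                  (\<Sum>j\<le>2 * N + 1. c j * X ^ j)) (rectpath a b)"
      unfolding eq by (rule sum_int)
  qed
qed

lemma norm_inverse_minus_kernel_interval_rectpath_le:
  assumes "0 < \<delta>" "\<delta> \<le> 1/2" "z \<in> path_image (interval_rectpath \<delta>)" "x \<in> {-1..1}"
  shows "cmod (1 / (z - of_real x) - poly (inverse_kernel_poly N z) (of_real x))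
           \<le> (1 - \<delta> ^ 2 / 8) ^ Suc N / \<delta>"
  unfolding poly_inverse_kernel_poly
  using interval_rectpath_dist_bounds[OF assms] assms(1) by (intro norm_inverse_minus_kernel_le) auto

lemma norm_cauchy_minus_kernel_integral_le:
  assumes \<delta>: "0 < \<delta>" "\<delta> \<le> 1/2" and x: "x \<in> {-1..1}"
    and cont: "continuous_on (path_image (interval_rectpath \<delta>)) F"
    and bound: "\<And>z. z \<in> path_image (interval_rectpath \<delta>) \<Longrightarrow> cmod (F z) \<le> B"
    and cauchy: "((\<lambda>w. F w / (w - of_real x)) has_contour_integral I) (interval_rectpath \<delta>)"
    and kernel: "((\<lambda>w. F w * poly (inverse_kernel_poly N w) (of_real x)) has_contour_integral K)
                   (interval_rectpath \<delta>)"
  shows "cmod (I - K) \<le> B * ((1 - \<delta> ^ 2 / 8) ^ Suc N / \<delta>) * (4 * cmod (Complex (2 + 2 * \<delta>) (2 * \<delta>)))"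
proof -
  let ?\<gamma> = "path_image (interval_rectpath \<delta>)"
  have "0 \<le> B"
    using bound[OF pathstart_in_path_image] norm_ge_zero order_trans by blast
  define h where "h = (\<lambda>w. F w * (1 / (w - of_real x) - poly (inverse_kernel_poly N w) (of_real x)))"
  have "(h has_contour_integral (I - K)) (interval_rectpath \<delta>)"
    using has_contour_integral_diff[OF cauchy kernel]
    by (simp add: h_def right_diff_distrib divide_inverse)
  then have IK: "I - K = contour_integral (interval_rectpath \<delta>) h"
    by (rule contour_integral_unique[symmetric])
  have "z - of_real x \<noteq> 0" if "z \<in> ?\<gamma>" for z
    using interval_rectpath_dist_bounds[OF \<delta> that x] \<delta> by auto
  then have cont_h: "continuous_on ?\<gamma> h"
    using cont continuous_coeffs_on_inverse_kernel_poly[of ?\<gamma> N]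
    unfolding h_def poly_eq_sum_if_degree_le[OF degree_inverse_kernel_poly] continuous_coeffs_on_def
    by (intro continuous_intros) auto
  have h_bound: "cmod (h z) \<le> B * ((1 - \<delta> ^ 2 / 8) ^ Suc N / \<delta>)" if z: "z \<in> ?\<gamma>" for z
    unfolding h_def norm_mult
    using norm_inverse_minus_kernel_interval_rectpath_le[OF \<delta> z x] bound[OF z] \<open>0 \<le> B\<close>
    by (intro mult_mono) auto
  have "0 \<le> B * ((1 - \<delta> ^ 2 / 8) ^ Suc N / \<delta>)"
    using \<open>0 \<le> B\<close> \<delta> power_le_one[of \<delta> 2] by simp
  from norm_contour_integral_rectpath_le[OF cont_h[unfolded interval_rectpath_def]
         h_bound[unfolded interval_rectpath_def] this]
  have "cmod (I - K) \<le> B * ((1 - \<delta> ^ 2 / 8) ^ Suc N / \<delta>) *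
      (4 * cmod (Complex (1 + \<delta>) \<delta> - Complex (-1 - \<delta>) (-\<delta>)))"
    unfolding IK interval_rectpath_def .
  moreover have "Complex (1 + \<delta>) \<delta> - Complex (-1 - \<delta>) (-\<delta>) = Complex (2 + 2 * \<delta>) (2 * \<delta>)"
    by (simp add: complex_eq_iff)
  ultimately show ?thesis by simp
qed

lemma poly_sum_monom_Re_divide:
  "poly (\<Sum>j\<le>D. monom (Re (c j / w)) j) x = Re ((\<Sum>j\<le>D. c j * of_real x ^ j) / w)"
proof -
  have "Re (c j * of_real x ^ j / w) = Re (c j / w) * x ^ j" for j
  proof -
    have Re_mult: "Re (z * complex_of_real r) = Re z * r" for z r by simp
    have "Re (c j * of_real x ^ j / w) = Re (c j / w * of_real (x ^ j))" by simp
    also have "\<dots> = Re (c j / w) * x ^ j" by (rule Re_mult)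
    finally show ?thesis .
  qed
  then show ?thesis by (simp add: poly_sum poly_monom sum_divide_distrib Re_sum)
qed

lemma path_image_interval_rectpath_subset:
  "0 \<le> \<delta> \<Longrightarrow> path_image (interval_rectpath \<delta>) \<subseteq> interval_rectangle \<delta>"
  unfolding interval_rectpath_def interval_rectangle_def by (intro path_image_rectpath_subset_cbox) auto

lemma holomorphic_on_interval_rectangle_poly_approx:
  assumes \<delta>: "0 < \<delta>" "\<delta> \<le> 1/2" and holo: "F holomorphic_on interval_rectangle \<delta>"
    and bound: "\<And>z. z \<in> path_image (interval_rectpath \<delta>) \<Longrightarrow> cmod (F z) \<le> B"
  obtains q where "degree q \<le> 2 * N + 1"
    "\<And>x. x \<in> {-1..1} \<Longrightarrow> \<bar>Re (F (of_real x)) - poly q x\<bar>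
           \<le> B * ((1 - \<delta> ^ 2 / 8) ^ Suc N / \<delta>) * (4 * cmod (Complex (2 + 2 * \<delta>) (2 * \<delta>))) / (2 * pi)"
proof -
  have cont: "continuous_on (path_image (interval_rectpath \<delta>)) F"
    using holo path_image_interval_rectpath_subset \<delta>(1)
    by (meson continuous_on_subset holomorphic_on_imp_continuous_on less_imp_le)
  obtain c where c: "\<And>X. ((\<lambda>z. F z * poly (inverse_kernel_poly N z) X) has_contour_integral
                    (\<Sum>j\<le>2 * N + 1. c j * X ^ j)) (interval_rectpath \<delta>)"
    using has_contour_integral_inverse_kernel_poly[OF cont[unfolded interval_rectpath_def]]
    unfolding interval_rectpath_def by blast
  define q where "q = (\<Sum>j\<le>2 * N + 1. monom (Re (c j / (2 * pi * \<i>))) j)"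
  show ?thesis
  proof (rule that)
    show "degree q \<le> 2 * N + 1"
      unfolding q_def by (intro degree_sum_le) (auto intro: order_trans[OF degree_monom_le])
    fix x :: real assume x: "x \<in> {-1..1}"
    let ?E = "2 * pi * \<i> * F (of_real x) - (\<Sum>j\<le>2 * N + 1. c j * of_real x ^ j)"
    have "Re (F (of_real x)) - poly q x = Re (?E / (2 * pi * \<i>))"
      unfolding q_def poly_sum_monom_Re_divide by (simp add: diff_divide_distrib)
    then have "\<bar>Re (F (of_real x)) - poly q x\<bar> \<le> cmod ?E / (2 * pi)"
      using abs_Re_le_cmod[of "?E / (2 * pi * \<i>)"] by (simp add: norm_divide norm_mult)
    also have "\<dots> \<le> B * ((1 - \<delta> ^ 2 / 8) ^ Suc N / \<delta>) * (4 * cmod (Complex (2 + 2 * \<delta>) (2 * \<delta>))) / (2 * pi)"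
      using norm_cauchy_minus_kernel_integral_le[OF \<delta> x cont bound
              cauchy_integral_interval_rectpath[OF holo \<delta>(1) x] c] pi_gt_zero
      by (intro divide_right_mono) auto
    finally show "\<bar>Re (F (of_real x)) - poly q x\<bar>
        \<le> B * ((1 - \<delta> ^ 2 / 8) ^ Suc N / \<delta>) * (4 * cmod (Complex (2 + 2 * \<delta>) (2 * \<delta>))) / (2 * pi)" .
  qed
qed

lemma holomorphic_on_interval_rectangle_geometric_poly_approx:
  assumes \<delta>: "0 < \<delta>" "\<delta> \<le> 1/2" and holo: "F holomorphic_on interval_rectangle \<delta>"
  obtains C where "0 < C"
    "\<And>N. \<exists>q. degree q \<le> 2 * N + 1 \<and>
           (\<forall>x\<in>{-1..1}. \<bar>Re (F (of_real x)) - poly q x\<bar> \<le> C * (1 - \<delta> ^ 2 / 8) ^ N)"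
proof -
  let ?\<gamma> = "interval_rectpath \<delta>" and ?\<theta> = "1 - \<delta> ^ 2 / 8"
  have "compact (F ` path_image ?\<gamma>)"
    using holo path_image_interval_rectpath_subset[of \<delta>] \<delta>
    unfolding interval_rectpath_def
    by (intro compact_continuous_image compact_path_image)
       (auto intro: holomorphic_on_imp_continuous_on holomorphic_on_subset)
  then obtain B where B: "B > 0" "\<And>z. z \<in> path_image ?\<gamma> \<Longrightarrow> cmod (F z) \<le> B"
    using compact_imp_bounded bounded_pos by (metis imageI)
  define C where "C = B * (4 * cmod (Complex (2 + 2 * \<delta>) (2 * \<delta>))) / (\<delta> * (2 * pi))"
  have "C > 0" using B \<delta> by (simp add: C_def complex_eq_iff)
  have "\<delta> ^ 2 \<le> 1" using \<delta> by (simp add: power_le_one)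
  then have \<theta>: "0 \<le> ?\<theta>" "?\<theta> \<le> 1" by auto
  have "\<exists>q. degree q \<le> 2 * N + 1 \<and> (\<forall>x\<in>{-1..1}. \<bar>Re (F (of_real x)) - poly q x\<bar> \<le> C * ?\<theta> ^ N)" for N
  proof -
    obtain q where "degree q \<le> 2 * N + 1" and q: "\<And>x. x \<in> {-1..1} \<Longrightarrow> \<bar>Re (F (of_real x)) - poly q x\<bar>
        \<le> B * (?\<theta> ^ Suc N / \<delta>) * (4 * cmod (Complex (2 + 2 * \<delta>) (2 * \<delta>))) / (2 * pi)"
      using holomorphic_on_interval_rectangle_poly_approx[OF \<delta> holo B(2)] by blast
    have "B * (t / \<delta>) * (4 * cmod (Complex (2 + 2 * \<delta>) (2 * \<delta>))) / (2 * pi) = C * t" for t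
      unfolding C_def by (simp add: field_simps)
    then have "B * (?\<theta> ^ Suc N / \<delta>) * (4 * cmod (Complex (2 + 2 * \<delta>) (2 * \<delta>))) / (2 * pi) = C * ?\<theta> ^ Suc N" .
    also have "\<dots> \<le> C * ?\<theta> ^ N"
      using \<open>C > 0\<close> \<theta> by (intro mult_left_mono power_decreasing) auto
    finally show ?thesis using \<open>degree q \<le> 2 * N + 1\<close> q by (meson order_trans)
  qed
  with \<open>C > 0\<close> show ?thesis using that by blast
qed

section \<open>Geometric decay of the coefficient matrix\<close>

lemma real_analytic_on_interval_geometric_poly_approx:
  assumes "real_analytic_on_interval f"
  obtains C \<theta> where "continuous_on {-1..1} f" "0 < C" "0 < \<theta>" "\<theta> < 1"
    "\<And>N. \<exists>q. degree q \<le> 2 * N + 1 \<and> (\<forall>x\<in>{-1..1}. \<bar>f x - poly q x\<bar> \<le> C * \<theta> ^ N)"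
proof -
  obtain U F where U: "open U" "F holomorphic_on U"
    and F: "\<And>x. x \<in> {-1..1} \<Longrightarrow> complex_of_real x \<in> U \<and> F (of_real x) = of_real (f x)"
    using real_analytic_on_interval_holomorphic_extension[OF assms] by blast
  obtain \<delta> where \<delta>: "0 < \<delta>" "\<delta> \<le> 1/2" "interval_rectangle \<delta> \<subseteq> U"
    using interval_rectangle_subset_open[OF U(1)] F by blast
  obtain C where "0 < C" and approx:
    "\<And>N. \<exists>q. degree q \<le> 2 * N + 1 \<and>
           (\<forall>x\<in>{-1..1}. \<bar>Re (F (of_real x)) - poly q x\<bar> \<le> C * (1 - \<delta> ^ 2 / 8) ^ N)"
    using holomorphic_on_interval_rectangle_geometric_poly_approx[OF \<delta>(1,2)
            holomorphic_on_subset[OF U(2) \<delta>(3)]] by blast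
  have Re_F: "Re (F (of_real x)) = f x" if "x \<in> {-1..1}" for x
    using F[OF that] by simp
  have "continuous_on {-1..1} (\<lambda>x. Re (F (of_real x)))"
    using F by (intro continuous_intros continuous_on_compose2[OF holomorphic_on_imp_continuous_on[OF U(2)]])
      auto
  then have "continuous_on {-1..1} f" by (rule continuous_on_eq) (simp add: Re_F)
  moreover have "0 < 1 - \<delta> ^ 2 / 8" "1 - \<delta> ^ 2 / 8 < 1"
    using \<delta> power_le_one[of \<delta> 2] by auto
  moreover have "\<exists>q. degree q \<le> 2 * N + 1 \<and> (\<forall>x\<in>{-1..1}. \<bar>f x - poly q x\<bar> \<le> C * (1 - \<delta> ^ 2 / 8) ^ N)" for N
    using approx[of N] Re_F by auto
  ultimately show ?thesis using that \<open>0 < C\<close> by blast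
qed

lemma abs_coeff_matrix_heaviside_le_poly_approx:
  assumes cont: "continuous_on {-1..1} h"
    and "degree q \<le> 2 * N + 1" and approx: "\<And>x. x \<in> {-1..1} \<Longrightarrow> \<bar>h x - poly q x\<bar> \<le> E"
    and far: "2 * N + 3 \<le> k - l \<or> 2 * N + 3 \<le> l - k"
  shows "\<bar>coeff_matrix (\<lambda>t s. h t * heaviside (t - s)) k l\<bar> \<le> 9 / 4 * E"
proof (rule abs_coeff_matrix_heaviside_le[OF cont approx])
  show "poly_integral (q * orthonormal_legendre_poly k * legendre_antideriv l) = 0"
    using assms(2) far by (intro poly_integral_legendre_triple_eq_0) linarith
qed

lemma abs_coeff_matrix_heaviside_le_power:
  assumes cont: "continuous_on {-1..1} h" and M: "\<And>x. x \<in> {-1..1} \<Longrightarrow> \<bar>h x\<bar> \<le> M"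
    and \<sigma>: "0 < \<sigma>" "\<sigma> < 1" and "0 \<le> C"
    and approx: "\<And>N. \<exists>q. degree q \<le> 2 * N + 1 \<and> (\<forall>x\<in>{-1..1}. \<bar>h x - poly q x\<bar> \<le> C * \<sigma> ^ (2 * N))"
    and m: "m = (if k \<le> l then l - k else k - l)"
  shows "\<bar>coeff_matrix (\<lambda>t s. h t * heaviside (t - s)) k l\<bar> \<le> 9/4 * (C / \<sigma> ^ 4 + M / \<sigma> ^ 2) * \<sigma> ^ m"
proof -
  have "0 \<le> M" using M[of 0] by auto
  show ?thesis
  proof (cases "m \<le> 2")
    case True
    have "\<bar>coeff_matrix (\<lambda>t s. h t * heaviside (t - s)) k l\<bar> \<le> 9/4 * M"
      using M by (intro abs_coeff_matrix_heaviside_le[OF cont, of 0]) auto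
    also have "\<dots> = 9/4 * (M / \<sigma> ^ 2) * \<sigma> ^ 2" using \<sigma> by simp
    also have "\<dots> \<le> 9/4 * (M / \<sigma> ^ 2) * \<sigma> ^ m"
      using True \<sigma> \<open>0 \<le> M\<close> by (intro mult_left_mono power_decreasing) auto
    also have "\<dots> \<le> 9/4 * (C / \<sigma> ^ 4 + M / \<sigma> ^ 2) * \<sigma> ^ m"
      using \<open>0 \<le> C\<close> \<sigma> by (intro mult_right_mono) auto
    finally show ?thesis .
  next
    case False
    define N where "N = (m - 3) div 2"
    have N: "2 * N + 3 \<le> m" "m \<le> 2 * N + 4" using False by (auto simp: N_def)
    obtain q where q: "degree q \<le> 2 * N + 1" "\<And>x. x \<in> {-1..1} \<Longrightarrow> \<bar>h x - poly q x\<bar> \<le> C * \<sigma> ^ (2 * N)"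
      using approx[of N] by blast
    have "\<bar>coeff_matrix (\<lambda>t s. h t * heaviside (t - s)) k l\<bar> \<le> 9/4 * (C * \<sigma> ^ (2 * N))"
      using N(1) m by (intro abs_coeff_matrix_heaviside_le_poly_approx[OF cont q]) (auto split: if_splits)
    also have "\<dots> = 9/4 * (C / \<sigma> ^ 4) * \<sigma> ^ (2 * N + 4)"
      using \<sigma> by (simp add: power_add)
    also have "\<dots> \<le> 9/4 * (C / \<sigma> ^ 4) * \<sigma> ^ m"
      using N \<sigma> \<open>0 \<le> C\<close> by (intro mult_left_mono power_decreasing) auto
    also have "\<dots> \<le> 9/4 * (C / \<sigma> ^ 4 + M / \<sigma> ^ 2) * \<sigma> ^ m"
      using \<open>0 \<le> M\<close> \<sigma> by (intro mult_right_mono) auto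
    finally show ?thesis .
  qed
qed

lemma coeff_matrix_heaviside_geometric_decay:
  assumes cont: "continuous_on {-1..1} h" and C: "0 < C" and \<theta>: "0 < \<theta>" "\<theta> < 1"
    and approx: "\<And>N. \<exists>q. degree q \<le> 2 * N + 1 \<and> (\<forall>x\<in>{-1..1}. \<bar>h x - poly q x\<bar> \<le> C * \<theta> ^ N)"
  shows "\<exists>K>0. \<exists>\<rho>>1. \<forall>k l.
           \<bar>coeff_matrix (\<lambda>t s. h t * heaviside (t - s)) k l\<bar> \<le> K * \<rho> powr (- \<bar>real k - real l\<bar>)"
proof -
  have "compact (h ` {-1..1})" using cont by (intro compact_continuous_image) auto
  then obtain M where M: "M > 0" "\<And>x. x \<in> {-1..1} \<Longrightarrow> \<bar>h x\<bar> \<le> M"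
    using compact_imp_bounded bounded_pos by (metis imageI real_norm_def)
  define \<sigma> where "\<sigma> = sqrt \<theta>"
  have \<sigma>: "0 < \<sigma>" "\<sigma> < 1" "\<theta> ^ N = \<sigma> ^ (2 * N)" for N
    using \<theta> by (auto simp: \<sigma>_def power_mult)
  define K where "K = 9/4 * (C / \<sigma> ^ 4 + M / \<sigma> ^ 2)"
  have "K > 0" unfolding K_def using C M \<sigma> by (simp add: add_pos_pos)
  have "\<bar>coeff_matrix (\<lambda>t s. h t * heaviside (t - s)) k l\<bar> \<le> K * (1 / \<sigma>) powr (- \<bar>real k - real l\<bar>)"
    for k l
  proof -
    define m where "m = (if k \<le> l then l - k else k - l)"
    have "\<bar>real k - real l\<bar> = real m" by (auto simp: m_def of_nat_diff)
    then have "(1 / \<sigma>) powr (- \<bar>real k - real l\<bar>) = inverse ((1 / \<sigma>) powr real m)"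
      by (simp add: powr_minus)
    also have "(1 / \<sigma>) powr real m = (1 / \<sigma>) ^ m" using \<sigma> by (simp add: powr_realpow)
    finally have "(1 / \<sigma>) powr (- \<bar>real k - real l\<bar>) = \<sigma> ^ m" by (simp add: power_one_over)
    with abs_coeff_matrix_heaviside_le_power[OF cont M(2) \<sigma>(1,2) less_imp_le[OF C] _ m_def] approx
    show ?thesis unfolding K_def \<sigma>(3) by simp
  qed
  moreover have "1 / \<sigma> > 1" using \<sigma> by simp
  ultimately show ?thesis using \<open>K > 0\<close> by blast
qed

lemma real_analytic_on_interval_coeff_matrix_heaviside_decay:
  assumes "real_analytic_on_interval f"
  shows "\<exists>K>0. \<exists>\<rho>>1. \<forall>k l.
           \<bar>coeff_matrix (\<lambda>t s. f t * heaviside (t - s)) k l\<bar> \<le> K * \<rho> powr (- \<bar>real k - real l\<bar>)"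
proof -
  obtain C \<theta> where "continuous_on {-1..1} f" "0 < C" "0 < \<theta>" "\<theta> < 1"
    "\<And>N. \<exists>q. degree q \<le> 2 * N + 1 \<and> (\<forall>x\<in>{-1..1}. \<bar>f x - poly q x\<bar> \<le> C * \<theta> ^ N)"
    using real_analytic_on_interval_geometric_poly_approx[OF assms] by blast
  then show ?thesis by (rule coeff_matrix_heaviside_geometric_decay)
qed

lemma nonneg_of_abs_le_mult_powr:
  fixes \<rho> :: real
  assumes "\<bar>a\<bar> \<le> K * \<rho> powr x" "\<rho> > 0"
  shows "0 \<le> K"
proof -
  have "0 \<le> K * \<rho> powr x" using assms(1) abs_ge_zero[of a] by linarith
  then show ?thesis using assms(2) by (simp add: zero_le_mult_iff)
qed

lemma summable_abs_mult_of_geometric_decay: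
  fixes A B :: "nat \<Rightarrow> nat \<Rightarrow> real"
  assumes A: "\<forall>k j. \<bar>A k j\<bar> \<le> K * \<rho> powr (- \<bar>real k - real j\<bar>)" and "\<rho> > 1"
    and B: "\<forall>j l. \<bar>B j l\<bar> \<le> K' * \<rho>' powr (- \<bar>real j - real l\<bar>)" and "\<rho>' > 1"
  shows "summable (\<lambda>j. \<bar>A k j * B j l\<bar>)"
proof (rule summable_comparison_test')
  have "0 \<le> K" "0 \<le> K'"
    using A B \<open>\<rho> > 1\<close> \<open>\<rho>' > 1\<close> nonneg_of_abs_le_mult_powr by (meson less_trans zero_less_one)+
  have "\<rho>' powr (- \<bar>real j - real l\<bar>) \<le> 1" for j
    using \<open>\<rho>' > 1\<close> powr_mono[of "- \<bar>real j - real l\<bar>" 0 \<rho>'] by simp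
  then have "K' * \<rho>' powr (- \<bar>real j - real l\<bar>) \<le> K'" for j
    using mult_left_mono[OF _ \<open>0 \<le> K'\<close>] by (metis mult.right_neutral)
  then have B_le: "\<bar>B j l\<bar> \<le> K'" for j
    using B order_trans by blast
  have "\<rho> powr (- \<bar>real k - real j\<bar>) \<le> \<rho> powr (real k - real j)" for j
    using \<open>\<rho> > 1\<close> by (intro powr_mono) auto
  also have "\<rho> powr (real k - real j) = \<rho> ^ k * (1 / \<rho>) ^ j" for j
    using \<open>\<rho> > 1\<close> by (simp add: powr_diff powr_realpow power_one_over divide_inverse power_inverse)
  finally have A_le: "\<bar>A k j\<bar> \<le> K * (\<rho> ^ k * (1 / \<rho>) ^ j)" for j
    using A[rule_format, of k j] mult_left_mono[OF _ \<open>0 \<le> K\<close>] by (meson order_trans)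
  show "norm \<bar>A k j * B j l\<bar> \<le> K * \<rho> ^ k * K' * (1 / \<rho>) ^ j" for j
  proof -
    have "\<bar>A k j\<bar> * \<bar>B j l\<bar> \<le> K * (\<rho> ^ k * (1 / \<rho>) ^ j) * K'"
      using A_le[of j] B_le[of j] \<open>0 \<le> K\<close> \<open>\<rho> > 1\<close> by (intro mult_mono) auto
    then show ?thesis by (simp add: abs_mult ac_simps)
  qed
  show "summable (\<lambda>j. K * \<rho> ^ k * K' * (1 / \<rho>) ^ j)"
    using \<open>\<rho> > 1\<close> by (intro summable_mult summable_geometric) auto
qed

theorem mainTheorem9:
  fixes f :: "real \<Rightarrow> real"
  assumes "real_analytic_on_interval f"
  shows "(\<exists>K>0. \<exists>\<rho>>1. \<forall>k l.
            \<bar>coeff_matrix (\<lambda>t s. f t * heaviside (t - s)) k l\<bar>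
              \<le> K * \<rho> powr (- \<bar>real k - real l\<bar>))
       \<and> (\<forall>g. real_analytic_on_interval g \<longrightarrow>
            (\<forall>k l. summable (\<lambda>j. \<bar>coeff_matrix (\<lambda>t s. f t * heaviside (t - s)) k j
                                   * coeff_matrix (\<lambda>t s. g t * heaviside (t - s)) j l\<bar>)))"
proof -
  obtain K \<rho> where "K > 0" "\<rho> > 1" and decay_f: "\<forall>k l.
      \<bar>coeff_matrix (\<lambda>t s. f t * heaviside (t - s)) k l\<bar> \<le> K * \<rho> powr (- \<bar>real k - real l\<bar>)"
    using real_analytic_on_interval_coeff_matrix_heaviside_decay[OF assms] by blast
  moreover have "summable (\<lambda>j. \<bar>coeff_matrix (\<lambda>t s. f t * heaviside (t - s)) k j
                               * coeff_matrix (\<lambda>t s. g t * heaviside (t - s)) j l\<bar>)"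
    if g: "real_analytic_on_interval g" for g k l
  proof -
    obtain K' \<rho>' where "\<rho>' > 1" and decay_g: "\<forall>k l.
        \<bar>coeff_matrix (\<lambda>t s. g t * heaviside (t - s)) k l\<bar> \<le> K' * \<rho>' powr (- \<bar>real k - real l\<bar>)"
      using real_analytic_on_interval_coeff_matrix_heaviside_decay[OF g] by blast
    show ?thesis by (rule summable_abs_mult_of_geometric_decay[OF decay_f \<open>\<rho> > 1\<close> decay_g \<open>\<rho>' > 1\<close>])
  qed
  ultimately show ?thesis by blast
qed

end
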